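(* Let $(\Gamma,f,\mu)$ be a measured Reeb graph with no boundary vertices. Then the set of totally negative circulation functions on $\Gamma$ is a (possibly empty) open convex polytope in the affine space of all circulation functions on $\Gamma$. In particular, the set of totally negative circulation functions on $\Gamma$ is bounded.
   Context: A Reeb graph $(\Gamma,f)$ is a finite connected oriented graph $\Gamma$ with a continuous function $f\colon\Gamma\to\mathbb{R}$ strictly increasing along each edge in its orientation, all of whose vertices are $1$-valent or $3$-valent ($1$-valent ones being of two types, boundary and non-boundary), such that at each $3$-valent vertex there are either two incoming and one outgoing edge or vice versa. At a $3$-valent vertex $v$ the trunk $e_0$ is the edge alone in its direction and the other two edges $e_1,e_2$ are branches. A measure $\mu$ on $\Gamma$ is log-smooth if it has a smooth non-vanishing density $d\mu/df$ at interior points and $1$-valent vertices, and near each $3$-valent vertex $v$, with $\tilde f=f-f(v)$, there are functions $\psi,\eta_0,\eta_1,\eta_2$ smooth near $0$ with $\psi(0)=0,\psi'(0)\ne0$, $\eta_0+\eta_1+\eta_2=0$, and $\mu([v,x])=\varepsilon_i\psi(\tilde f(x))\ln|\tilde f(x)|+\eta_i(\tilde f(x))$ for $x\in e_i$ near $v$, $\varepsilon_0=2,\varepsilon_1=\varepsilon_2=-1$. A measured Reeb graph is a Reeb graph with a log-smooth measure. Let $V$ be the vertex set. A circulation function on $(\Gamma,f,\mu)$ is a function $\mathfrak{c}\colon\Gamma\setminus V\to\mathbb{R}$, continuous, such that: (i) for every vertex $v$ and edge $e\ni v$, the limit of $\mathfrak{c}(x)$ as $x\to v$ along $e$ exists and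 is finite; (ii) if $x,y$ are interior points of one edge, the edge pointing from $x$ to $y$, then $\mathfrak{c}(y)-\mathfrak{c}(x)=\int_{[x,y]}f\,d\mu$; (iii) at every non-boundary vertex $v$, the sum of the limits of $\mathfrak{c}$ at $v$ along edges pointing into $v$ equals the sum of the limits along edges pointing out of $v$. The set of circulation functions is an affine space (possibly empty). For a $3$-valent vertex $v$ with adjacent edges $e_0,e_1,e_2$ let $c_i(v)$ be the limit of $\mathfrak{c}$ at $v$ along $e_i$; $\mathfrak{c}$ is totally negative if $c_0(v),c_1(v),c_2(v)<0$ for every $3$-valent vertex $v$. *)

theory Defs
  imports "HOL-Analysis.Analysis"
begin

text \<open>
  Since f is continuous and strictly increasing along each
  edge, f restricted to a closed edge is a homeomorphism onto the interval
  [h (src e), h (tgt e)], where h v = f(v) is the value of f at the vertex v.  We therefore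
  identify an interior point of the edge e with the pair (e, t), t in the open interval
  ]h (src e), h (tgt e)[, and f(e,t) = t.
\<close>

definition lo :: "('e \<Rightarrow> 'v) \<Rightarrow> ('v \<Rightarrow> real) \<Rightarrow> 'e \<Rightarrow> real" where
  "lo src h e = h (src e)"

definition hi :: "('e \<Rightarrow> 'v) \<Rightarrow> ('v \<Rightarrow> real) \<Rightarrow> 'e \<Rightarrow> real" where
  "hi tgt h e = h (tgt e)"

definition indeg :: "'e set \<Rightarrow> ('e \<Rightarrow> 'v) \<Rightarrow> 'v \<Rightarrow> nat" where
  "indeg E tgt v = card {e \<in> E. tgt e = v}"

definition outdeg :: "'e set \<Rightarrow> ('e \<Rightarrow> 'v) \<Rightarrow> 'v \<Rightarrow> nat" where
  "outdeg E src v = card {e \<in> E. src e = v}"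

definition adj_edges :: "'e set \<Rightarrow> ('e \<Rightarrow> 'v) \<Rightarrow> ('e \<Rightarrow> 'v) \<Rightarrow> 'v \<Rightarrow> 'e set" where
  "adj_edges E src tgt v = {e \<in> E. src e = v \<or> tgt e = v}"

definition univalent :: "'e set \<Rightarrow> ('e \<Rightarrow> 'v) \<Rightarrow> ('e \<Rightarrow> 'v) \<Rightarrow> 'v \<Rightarrow> bool" where
  "univalent E src tgt v \<longleftrightarrow> indeg E tgt v + outdeg E src v = 1"

definition trivalent :: "'e set \<Rightarrow> ('e \<Rightarrow> 'v) \<Rightarrow> ('e \<Rightarrow> 'v) \<Rightarrow> 'v \<Rightarrow> bool" where
  "trivalent E src tgt v \<longleftrightarrow>
     (indeg E tgt v = 2 \<and> outdeg E src v = 1) \<or> (indeg E tgt v = 1 \<and> outdeg E src v = 2)"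

definition graph_connected :: "'v set \<Rightarrow> 'e set \<Rightarrow> ('e \<Rightarrow> 'v) \<Rightarrow> ('e \<Rightarrow> 'v) \<Rightarrow> bool" where
  "graph_connected V E src tgt \<longleftrightarrow>
     (\<forall>u\<in>V. \<forall>w\<in>V. (u, w) \<in> ({(src e, tgt e) | e. e \<in> E} \<union> {(tgt e, src e) | e. e \<in> E})\<^sup>*)"

definition reeb_graph ::
  "'v set \<Rightarrow> 'e set \<Rightarrow> ('e \<Rightarrow> 'v) \<Rightarrow> ('e \<Rightarrow> 'v) \<Rightarrow> ('v \<Rightarrow> real) \<Rightarrow> 'v set \<Rightarrow> bool" where
  "reeb_graph V E src tgt h B \<longleftrightarrow>
     finite V \<and> finite E \<and> V \<noteq> {} \<and>
     (\<forall>e\<in>E. src e \<in> V \<and> tgt e \<in> V \<and> h (src e) < h (tgt e)) \<and>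
     graph_connected V E src tgt \<and>
     (\<forall>v\<in>V. univalent E src tgt v \<or> trivalent E src tgt v) \<and>
     B \<subseteq> {v \<in> V. univalent E src tgt v}"

definition Cinf_on :: "real set \<Rightarrow> (real \<Rightarrow> real) \<Rightarrow> bool" where
  "Cinf_on S g \<longleftrightarrow> (\<forall>n. ((deriv ^^ n) g) differentiable_on S)"

text \<open>
  The measure mu is encoded by its densities d mu / d f on the open edges:
  rho e t is the density at the point (e,t).  For x = (e,t) on an edge e adjacent to v,
  mu([v,x]) is the integral of rho e between h v and t (log-smooth measures have no atoms).
\<close>
definition mu_from ::
  "('e \<Rightarrow> 'v) \<Rightarrow> ('v \<Rightarrow> real) \<Rightarrow> ('e \<Rightarrow> real \<Rightarrow> real) \<Rightarrow> 'v \<Rightarrow> 'e \<Rightarrow> real \<Rightarrow> real" where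
  "mu_from src h rho v e t =
     (if src e = v then integral {h v..t} (rho e) else integral {t..h v} (rho e))"

definition is_trunk :: "'e set \<Rightarrow> ('e \<Rightarrow> 'v) \<Rightarrow> ('e \<Rightarrow> 'v) \<Rightarrow> 'v \<Rightarrow> 'e \<Rightarrow> bool" where
  "is_trunk E src tgt v e \<longleftrightarrow>
     (tgt e = v \<and> indeg E tgt v = 1) \<or> (src e = v \<and> outdeg E src v = 1)"

definition eps :: "'e set \<Rightarrow> ('e \<Rightarrow> 'v) \<Rightarrow> ('e \<Rightarrow> 'v) \<Rightarrow> 'v \<Rightarrow> 'e \<Rightarrow> real" where
  "eps E src tgt v e = (if is_trunk E src tgt v e then 2 else -1)"

definition log_smooth ::
  "'v set \<Rightarrow> 'e set \<Rightarrow> ('e \<Rightarrow> 'v) \<Rightarrow> ('e \<Rightarrow> 'v) \<Rightarrow> ('v \<Rightarrow> real) \<Rightarrow> ('e \<Rightarrow> real \<Rightarrow> real) \<Rightarrow> bool" where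
  "log_smooth V E src tgt h rho \<longleftrightarrow>
     (\<forall>e\<in>E. Cinf_on {lo src h e<..<hi tgt h e} (rho e) \<and>
             (\<forall>t\<in>{lo src h e<..<hi tgt h e}. rho e t > 0)) \<and>
     (\<forall>v\<in>V. univalent E src tgt v \<longrightarrow>
        (\<forall>e\<in>adj_edges E src tgt v. \<exists>g \<delta>. \<delta> > 0 \<and> Cinf_on (ball (h v) \<delta>) g \<and> g (h v) \<noteq> 0 \<and>
            (\<forall>t\<in>{lo src h e<..<hi tgt h e}. \<bar>t - h v\<bar> < \<delta> \<longrightarrow> rho e t = g t))) \<and>
     (\<forall>v\<in>V. trivalent E src tgt v \<longrightarrow>
        (\<exists>\<psi> \<eta> \<delta>. \<delta> > 0 \<and> Cinf_on (ball 0 \<delta>) \<psi> \<and>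
            (\<forall>e\<in>adj_edges E src tgt v. Cinf_on (ball 0 \<delta>) (\<eta> e)) \<and>
            \<psi> 0 = 0 \<and> deriv \<psi> 0 \<noteq> 0 \<and>
            (\<forall>s\<in>ball 0 \<delta>. (\<Sum>e\<in>adj_edges E src tgt v. \<eta> e s) = 0) \<and>
            (\<forall>e\<in>adj_edges E src tgt v. \<forall>t\<in>{lo src h e<..<hi tgt h e}. \<bar>t - h v\<bar> < \<delta> \<longrightarrow>
               rho e integrable_on closed_segment (h v) t \<and>
               mu_from src h rho v e t =
                 eps E src tgt v e * \<psi> (t - h v) * ln \<bar>t - h v\<bar> + \<eta> e (t - h v))))"

definition lim_src :: "('e \<Rightarrow> 'v) \<Rightarrow> ('v \<Rightarrow> real) \<Rightarrow> ('e \<Rightarrow> real \<Rightarrow> real) \<Rightarrow> 'e \<Rightarrow> real" where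
  "lim_src src h c e = Lim (at_right (lo src h e)) (c e)"

definition lim_tgt :: "('e \<Rightarrow> 'v) \<Rightarrow> ('v \<Rightarrow> real) \<Rightarrow> ('e \<Rightarrow> real \<Rightarrow> real) \<Rightarrow> 'e \<Rightarrow> real" where
  "lim_tgt tgt h c e = Lim (at_left (hi tgt h e)) (c e)"

definition lim_at ::
  "('e \<Rightarrow> 'v) \<Rightarrow> ('e \<Rightarrow> 'v) \<Rightarrow> ('v \<Rightarrow> real) \<Rightarrow> ('e \<Rightarrow> real \<Rightarrow> real) \<Rightarrow> 'v \<Rightarrow> 'e \<Rightarrow> real" where
  "lim_at src tgt h c v e = (if src e = v then lim_src src h c e else lim_tgt tgt h c e)"

text \<open>
  A function on Gamma minus V is represented by c :: 'e => real => real,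
  where c e t is the value at the interior point (e,t); values outside the open edges are
  normalised to 0 (so that c is determined by its values on Gamma minus V).
\<close>
definition circulation ::
  "'v set \<Rightarrow> 'e set \<Rightarrow> ('e \<Rightarrow> 'v) \<Rightarrow> ('e \<Rightarrow> 'v) \<Rightarrow> ('v \<Rightarrow> real) \<Rightarrow> ('e \<Rightarrow> real \<Rightarrow> real)
     \<Rightarrow> 'v set \<Rightarrow> ('e \<Rightarrow> real \<Rightarrow> real) \<Rightarrow> bool" where
  "circulation V E src tgt h rho B c \<longleftrightarrow>
     (\<forall>e t. (e \<notin> E \<or> t \<notin> {lo src h e<..<hi tgt h e}) \<longrightarrow> c e t = 0) \<and>
     (\<forall>e\<in>E. continuous_on {lo src h e<..<hi tgt h e} (c e)) \<and>
     (\<forall>e\<in>E. (\<exists>L. (c e \<longlongrightarrow> L) (at_right (lo src h e))) \<and>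
             (\<exists>L. (c e \<longlongrightarrow> L) (at_left (hi tgt h e)))) \<and>
     (\<forall>e\<in>E. \<forall>s\<in>{lo src h e<..<hi tgt h e}. \<forall>t\<in>{lo src h e<..<hi tgt h e}. s \<le> t \<longrightarrow>
        (\<lambda>\<tau>. \<tau> * rho e \<tau>) integrable_on {s..t} \<and>
        c e t - c e s = integral {s..t} (\<lambda>\<tau>. \<tau> * rho e \<tau>)) \<and>
     (\<forall>v\<in>V - B. (\<Sum>e\<in>{e \<in> E. tgt e = v}. lim_tgt tgt h c e) =
                 (\<Sum>e\<in>{e \<in> E. src e = v}. lim_src src h c e))"

definition totally_negative ::
  "'v set \<Rightarrow> 'e set \<Rightarrow> ('e \<Rightarrow> 'v) \<Rightarrow> ('e \<Rightarrow> 'v) \<Rightarrow> ('v \<Rightarrow> real) \<Rightarrow> ('e \<Rightarrow> real \<Rightarrow> real) \<Rightarrow> bool" where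
  "totally_negative V E src tgt h c \<longleftrightarrow>
     (\<forall>v\<in>V. trivalent E src tgt v \<longrightarrow>
        (\<forall>e\<in>adj_edges E src tgt v. lim_at src tgt h c v e < 0))"

definition affine_functional_on :: "('e \<Rightarrow> real \<Rightarrow> real) set \<Rightarrow> (('e \<Rightarrow> real \<Rightarrow> real) \<Rightarrow> real) \<Rightarrow> bool" where
  "affine_functional_on A l \<longleftrightarrow>
     (\<forall>a\<in>A. \<forall>b\<in>A. \<forall>u::real.
        l (\<lambda>e t. u * a e t + (1 - u) * b e t) = u * l a + (1 - u) * l b)"

definition finite_dim_affine :: "('e \<Rightarrow> real \<Rightarrow> real) set \<Rightarrow> bool" where
  "finite_dim_affine A \<longleftrightarrow>
     (\<exists>F. finite F \<and> F \<subseteq> A \<and>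
        (\<forall>c\<in>A. \<exists>w. sum w F = 1 \<and> c = (\<lambda>e t. \<Sum>g\<in>F. w g * g e t)))"

definition open_convex_polytope_in ::
  "('e \<Rightarrow> real \<Rightarrow> real) set \<Rightarrow> ('e \<Rightarrow> real \<Rightarrow> real) set \<Rightarrow> bool" where
  "open_convex_polytope_in A S \<longleftrightarrow>
     finite_dim_affine A \<and>
     (\<exists>L. finite L \<and> (\<forall>l\<in>L. affine_functional_on A l) \<and>
          S = {c \<in> A. \<forall>l\<in>L. l c > 0}) \<and>
     (\<exists>M. \<forall>c\<in>S. \<forall>e t. \<bar>c e t\<bar> \<le> M)"

end

theory Submission
  imports Defs "HOL-Library.Function_Algebras"
begin

text \<open>
  By condition (ii), two circulation functions differ on each edge by a constant, so the
  circulation functions form an affine space of dimension at most the number of edges, and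
  each limit at a vertex is an affine functional on it; the totally negative ones are cut out
  by the finitely many strict inequalities  c_i(v) < 0.

  For boundedness, fix a circulation function c' and write the offset of c on the edge e as
  d e.  Total negativity forces the limit of c at the lower end of every edge to be \<le> 0 (at a
  1-valent minimum the Kirchhoff condition (iii) forces it to vanish), so d is bounded above.
  The offsets satisfy the Kirchhoff condition themselves, hence they sum to zero over the
  edges crossing any level of f; the edge e crosses the level f(tgt e), which bounds d e from
  below as well.
\<close>

lemma balanced_sum_over_level_crossing_edges:
  fixes d :: "'e \<Rightarrow> 'a::ab_group_add" and h :: "'v \<Rightarrow> real"
  assumes fV: "finite V" and fE: "finite E"
    and ends: "\<And>e. e \<in> E \<Longrightarrow> src e \<in> V \<and> tgt e \<in> V \<and> h (src e) < h (tgt e)"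
    and balanced: "\<And>v. v \<in> V \<Longrightarrow> (\<Sum>e\<in>{e\<in>E. tgt e = v}. d e) = (\<Sum>e\<in>{e\<in>E. src e = v}. d e)"
  shows "(\<Sum>e\<in>{e\<in>E. h (src e) < t \<and> t \<le> h (tgt e)}. d e) = 0"
proof -
  let ?W = "{v\<in>V. h v < t}"
  have group: "(\<Sum>v\<in>?W. \<Sum>e\<in>{e\<in>E. end e = v}. d e) = (\<Sum>e\<in>{e\<in>E. h (end e) < t}. d e)"
    if "\<And>e. e \<in> E \<Longrightarrow> end e \<in> V" for "end" :: "'e \<Rightarrow> 'v"
  proof -
    have "(\<Sum>v\<in>?W. \<Sum>e\<in>{e\<in>E. end e = v}. d e)
        = (\<Sum>v\<in>?W. \<Sum>e\<in>{x. x \<in> {e\<in>E. h (end e) < t} \<and> end x = v}. d e)"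
      by (intro sum.cong arg_cong[where f = "sum d"]) auto
    also have "\<dots> = (\<Sum>e\<in>{e\<in>E. h (end e) < t}. d e)"
      by (rule sum.group) (use fV fE that in auto)
    finally show ?thesis .
  qed
  have "(\<Sum>e\<in>{e\<in>E. h (tgt e) < t}. d e) = (\<Sum>e\<in>{e\<in>E. h (src e) < t}. d e)"
    using group[of tgt] group[of src] balanced ends by simp
  moreover have split: "{e\<in>E. h (src e) < t}
      = {e\<in>E. h (tgt e) < t} \<union> {e\<in>E. h (src e) < t \<and> t \<le> h (tgt e)}"
    using ends by force
  have "(\<Sum>e\<in>{e\<in>E. h (src e) < t}. d e)
      = (\<Sum>e\<in>{e\<in>E. h (tgt e) < t}. d e) + (\<Sum>e\<in>{e\<in>E. h (src e) < t \<and> t \<le> h (tgt e)}. d e)"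
    unfolding split by (rule sum.union_disjoint) (use fE in auto)
  ultimately show ?thesis by simp
qed

lemma balanced_bounded_above_abs_le:
  fixes d U :: "'e \<Rightarrow> real" and h :: "'v \<Rightarrow> real"
  assumes fV: "finite V" and fE: "finite E"
    and ends: "\<And>e. e \<in> E \<Longrightarrow> src e \<in> V \<and> tgt e \<in> V \<and> h (src e) < h (tgt e)"
    and balanced: "\<And>v. v \<in> V \<Longrightarrow> (\<Sum>e\<in>{e\<in>E. tgt e = v}. d e) = (\<Sum>e\<in>{e\<in>E. src e = v}. d e)"
    and above: "\<And>e. e \<in> E \<Longrightarrow> d e \<le> U e"
    and e0: "e0 \<in> E"
  shows "\<bar>d e0\<bar> \<le> (\<Sum>e\<in>E. \<bar>U e\<bar>)"
proof -
  define Cut where "Cut = {e\<in>E. h (src e) < h (tgt e0) \<and> h (tgt e0) \<le> h (tgt e)}"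
  have e0_Cut: "e0 \<in> Cut" and Cut_E: "Cut \<subseteq> E" using e0 ends by (auto simp: Cut_def)
  have fCut: "finite Cut" using fE Cut_E finite_subset by blast
  have "0 = (\<Sum>e\<in>Cut. d e)"
    unfolding Cut_def by (rule balanced_sum_over_level_crossing_edges[symmetric, OF fV fE ends balanced])
  also have "\<dots> = d e0 + (\<Sum>e\<in>Cut - {e0}. d e)" by (rule sum.remove[OF fCut e0_Cut])
  also have "(\<Sum>e\<in>Cut - {e0}. d e) \<le> (\<Sum>e\<in>Cut - {e0}. \<bar>U e\<bar>)"
    using above Cut_E by (intro sum_mono) force
  also have "\<dots> \<le> (\<Sum>e\<in>E. \<bar>U e\<bar>)" using fE Cut_E by (intro sum_mono2) auto
  finally have "- d e0 \<le> (\<Sum>e\<in>E. \<bar>U e\<bar>)" by simp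
  moreover have "d e0 \<le> (\<Sum>e\<in>E. \<bar>U e\<bar>)"
    using above[OF e0] member_le_sum[of e0 E "\<lambda>e. \<bar>U e\<bar>"] fE e0 by force
  ultimately show ?thesis by linarith
qed

lemma bounded_on_open_interval_if_limits_at_ends:
  fixes g :: "real \<Rightarrow> real"
  assumes ab: "a < b" and cont: "continuous_on {a<..<b} g"
    and lim_a: "(g \<longlongrightarrow> La) (at_right a)" and lim_b: "(g \<longlongrightarrow> Lb) (at_left b)"
  shows "\<exists>K. \<forall>t\<in>{a<..<b}. \<bar>g t\<bar> \<le> K"
proof -
  obtain a' where a': "a' > a" "\<And>s. a < s \<Longrightarrow> s < a' \<Longrightarrow> \<bar>g s - La\<bar> < 1"
    using lim_a[unfolded tendsto_iff, rule_format, of 1]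
    by (auto simp: eventually_at_right_field dist_real_def)
  obtain b' where b': "b' < b" "\<And>s. b' < s \<Longrightarrow> s < b \<Longrightarrow> \<bar>g s - Lb\<bar> < 1"
    using lim_b[unfolded tendsto_iff, rule_format, of 1]
    by (auto simp: eventually_at_left_field dist_real_def)
  define \<alpha> where "\<alpha> = min a' ((a + b) / 2)"
  define \<beta> where "\<beta> = max b' ((a + b) / 2)"
  have "a < \<alpha>" "\<beta> < b" using ab a' b' by (auto simp: \<alpha>_def \<beta>_def)
  then have sub: "{\<alpha>..\<beta>} \<subseteq> {a<..<b}" by auto
  have "compact (g ` {\<alpha>..\<beta>})"
    using continuous_on_subset[OF cont sub] by (intro compact_continuous_image) auto
  then obtain K where "\<And>x. x \<in> g ` {\<alpha>..\<beta>} \<Longrightarrow> norm x \<le> K"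
    using compact_imp_bounded bounded_iff by metis
  then have K: "\<And>t. t \<in> {\<alpha>..\<beta>} \<Longrightarrow> \<bar>g t\<bar> \<le> K" by auto
  have "\<alpha> \<le> \<beta>" by (simp add: \<alpha>_def \<beta>_def)
  then have "\<bar>g \<alpha>\<bar> \<le> K" using K by simp
  then have K0: "0 \<le> K" by linarith
  have "\<bar>g t\<bar> \<le> K + \<bar>La\<bar> + \<bar>Lb\<bar> + 1" if t: "t \<in> {a<..<b}" for t
  proof (cases "t < \<alpha>")
    case True
    then have "\<bar>g t - La\<bar> < 1" using t a'(2) by (simp add: \<alpha>_def)
    then show ?thesis using K0 by linarith
  next
    case not_left: False
    show ?thesis
    proof (cases "\<beta> < t")
      case True
      then have "\<bar>g t - Lb\<bar> < 1" using t b'(2) by (simp add: \<beta>_def)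
      then show ?thesis using K0 by linarith
    next
      case False
      then have "\<bar>g t\<bar> \<le> K" using not_left K by simp
      then show ?thesis by linarith
    qed
  qed
  then show ?thesis by blast
qed

text \<open>
  There is no real_vector instance for function spaces, so linear spans of functions
  on \<Gamma> are taken in this interpretation of the vector space locale.
\<close>

definition fscale :: "real \<Rightarrow> ('e \<Rightarrow> real \<Rightarrow> real) \<Rightarrow> ('e \<Rightarrow> real \<Rightarrow> real)" where
  "fscale r f = (\<lambda>e t. r * f e t)"

interpretation fun_space: vector_space fscale
  by unfold_locales (auto simp: fscale_def fun_eq_iff algebra_simps)

lemma sum_fun_apply2: "(\<Sum>x\<in>S. g x) e t = (\<Sum>x\<in>S. (g x :: 'e \<Rightarrow> real \<Rightarrow> real) e t)"
  by (induction S rule: infinite_finite_induct) auto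

lemma finite_dim_affineI:
  assumes c0: "c0 \<in> A" and fG: "finite G" and offsets: "\<And>c. c \<in> A \<Longrightarrow> c - c0 \<in> fun_space.span G"
  shows "finite_dim_affine A"
proof -
  define D where "D = (\<lambda>c. c - c0) ` A"
  obtain B where BD: "B \<subseteq> D" and indB: "fun_space.independent B" and DB: "D \<subseteq> fun_space.span B"
    by (rule fun_space.maximal_independent_subset)
  have fB: "finite B"
    using fun_space.independent_span_bound[OF fG indB] BD offsets by (auto simp: D_def)
  have B0: "0 \<notin> B" using indB fun_space.dependent_zero by blast
  define F where "F = insert c0 ((+) c0 ` B)"
  have c0_notin: "c0 \<notin> (+) c0 ` B" using B0 by auto
  have sum_F: "(\<Sum>g\<in>F. G g) = G c0 + (\<Sum>b\<in>B. G (c0 + b))" for G :: "_ \<Rightarrow> real"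
    using fB c0_notin by (simp add: F_def sum.reindex inj_on_def)
  have "F \<subseteq> A" using c0 BD by (auto simp: F_def D_def)
  moreover have "\<exists>w. sum w F = 1 \<and> c = (\<lambda>e t. \<Sum>g\<in>F. w g * g e t)" if c: "c \<in> A" for c
  proof -
    have "c - c0 \<in> fun_space.span B" using DB c by (auto simp: D_def)
    then obtain u where u: "c - c0 = (\<Sum>b\<in>B. fscale (u b) b)"
      using fun_space.span_finite[OF fB] by auto
    define w where "w g = (if g = c0 then 1 - sum u B else u (g - c0))" for g
    have w_c0: "w c0 = 1 - sum u B" by (simp add: w_def)
    have w_B: "(\<Sum>b\<in>B. w (c0 + b) * G b) = (\<Sum>b\<in>B. u b * G b)" for G :: "_ \<Rightarrow> real"
      using B0 by (intro sum.cong) (auto simp: w_def)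
    have "c e t = (\<Sum>g\<in>F. w g * g e t)" for e t
    proof -
      have "(\<Sum>g\<in>F. w g * g e t) = (1 - sum u B) * c0 e t + (\<Sum>b\<in>B. u b * (c0 e t + b e t))"
        unfolding sum_F w_c0 using w_B[of "\<lambda>b. c0 e t + b e t"] by simp
      also have "\<dots> = c0 e t + (\<Sum>b\<in>B. u b * b e t)"
        by (simp add: algebra_simps sum.distrib flip: sum_distrib_right)
      also have "(\<Sum>b\<in>B. u b * b e t) = (c - c0) e t"
        unfolding u by (simp add: sum_fun_apply2 fscale_def)
      finally show ?thesis by simp
    qed
    moreover have "sum w F = 1" unfolding sum_F w_c0 using w_B[of "\<lambda>_. 1"] by simp
    ultimately show ?thesis by blast
  qed
  moreover have "finite F" using fB by (simp add: F_def)
  ultimately show ?thesis unfolding finite_dim_affine_def by blast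
qed

lemma circulation_tendsto_lims:
  assumes "circulation V E src tgt h rho B c" "e \<in> E"
  shows "(c e \<longlongrightarrow> lim_src src h c e) (at_right (lo src h e))"
    and "(c e \<longlongrightarrow> lim_tgt tgt h c e) (at_left (hi tgt h e))"
proof -
  from assms obtain La Lb where
    "(c e \<longlongrightarrow> La) (at_right (lo src h e))" "(c e \<longlongrightarrow> Lb) (at_left (hi tgt h e))"
    unfolding circulation_def by blast
  then show "(c e \<longlongrightarrow> lim_src src h c e) (at_right (lo src h e))"
    and "(c e \<longlongrightarrow> lim_tgt tgt h c e) (at_left (hi tgt h e))"
    unfolding lim_src_def lim_tgt_def by (auto simp: tendsto_Lim)
qed

lemma circulation_outside_edges:
  assumes "circulation V E src tgt h rho B c" "\<not> (e \<in> E \<and> t \<in> {lo src h e<..<hi tgt h e})"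
  shows "c e t = 0"
  using assms unfolding circulation_def by blast

lemma circulation_balanced:
  assumes "circulation V E src tgt h rho B c" "v \<in> V - B"
  shows "(\<Sum>e\<in>{e\<in>E. tgt e = v}. lim_tgt tgt h c e) = (\<Sum>e\<in>{e\<in>E. src e = v}. lim_src src h c e)"
  using assms unfolding circulation_def by blast

lemma circulation_increment:
  assumes "circulation V E src tgt h rho B c" "e \<in> E"
    and "s \<in> {lo src h e<..<hi tgt h e}" "t \<in> {lo src h e<..<hi tgt h e}" "s \<le> t"
  shows "c e t - c e s = integral {s..t} (\<lambda>\<tau>. \<tau> * rho e \<tau>)"
  using assms unfolding circulation_def by blast

lemma circulation_bounded_on_edge:
  assumes c: "circulation V E src tgt h rho B c" and e: "e \<in> E"
    and nonempty: "lo src h e < hi tgt h e"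
  shows "\<exists>K. \<forall>t\<in>{lo src h e<..<hi tgt h e}. \<bar>c e t\<bar> \<le> K"
proof (rule bounded_on_open_interval_if_limits_at_ends[OF nonempty])
  show "continuous_on {lo src h e<..<hi tgt h e} (c e)"
    using c e unfolding circulation_def by blast
qed (fact circulation_tendsto_lims[OF c e])+

lemma circulation_edge_offset:
  assumes c: "circulation V E src tgt h rho B c" and c': "circulation V E src tgt h rho B c'"
    and e: "e \<in> E" and t: "t \<in> {lo src h e<..<hi tgt h e}"
  shows "c e t = c' e t + (lim_src src h c e - lim_src src h c' e)"
proof -
  let ?F = "at_right (lo src h e)"
  have ev: "eventually (\<lambda>s. c e t - c e s = c' e t - c' e s) ?F"
    unfolding eventually_at_right_field
  proof (intro exI[of _ t] conjI allI impI)
    show "lo src h e < t" using t by simp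
    fix s assume "lo src h e < s" "s < t"
    then have "s \<in> {lo src h e<..<hi tgt h e}" using t by simp
    then show "c e t - c e s = c' e t - c' e s"
      using circulation_increment[OF c e] circulation_increment[OF c' e] t \<open>s < t\<close> by simp
  qed
  have "((\<lambda>s. c e t - c e s) \<longlongrightarrow> c e t - lim_src src h c e) ?F"
    by (intro tendsto_intros circulation_tendsto_lims[OF c e])
  then have "((\<lambda>s. c' e t - c' e s) \<longlongrightarrow> c e t - lim_src src h c e) ?F"
    using tendsto_cong[OF ev] by simp
  moreover have "((\<lambda>s. c' e t - c' e s) \<longlongrightarrow> c' e t - lim_src src h c' e) ?F"
    by (intro tendsto_intros circulation_tendsto_lims[OF c' e])
  ultimately have "c e t - lim_src src h c e = c' e t - lim_src src h c' e"
    by (rule tendsto_unique[rotated]) simp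
  then show ?thesis by simp
qed

lemma circulation_lim_tgt_offset:
  assumes c: "circulation V E src tgt h rho B c" and c': "circulation V E src tgt h rho B c'"
    and e: "e \<in> E" and nonempty: "lo src h e < hi tgt h e"
  shows "lim_tgt tgt h c e = lim_tgt tgt h c' e + (lim_src src h c e - lim_src src h c' e)"
proof -
  let ?d = "lim_src src h c e - lim_src src h c' e"
  have ev: "eventually (\<lambda>s. c' e s + ?d = c e s) (at_left (hi tgt h e))"
    unfolding eventually_at_left_field
    using circulation_edge_offset[OF c c' e] nonempty by (intro exI[of _ "lo src h e"]) auto
  have "((\<lambda>s. c' e s + ?d) \<longlongrightarrow> lim_tgt tgt h c' e + ?d) (at_left (hi tgt h e))"
    by (intro tendsto_intros circulation_tendsto_lims[OF c' e])
  then have "(c e \<longlongrightarrow> lim_tgt tgt h c' e + ?d) (at_left (hi tgt h e))"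
    using tendsto_cong[OF ev] by simp
  then show ?thesis unfolding lim_tgt_def[of _ _ c] by (rule tendsto_Lim[rotated]) simp
qed

lemma circulation_offsets_balanced:
  assumes c: "circulation V E src tgt h rho B c" and c': "circulation V E src tgt h rho B c'"
    and nonempty: "\<And>e. e \<in> E \<Longrightarrow> lo src h e < hi tgt h e" and v: "v \<in> V - B"
  shows "(\<Sum>e\<in>{e\<in>E. tgt e = v}. lim_src src h c e - lim_src src h c' e)
       = (\<Sum>e\<in>{e\<in>E. src e = v}. lim_src src h c e - lim_src src h c' e)"
proof -
  have "(\<Sum>e\<in>{e\<in>E. tgt e = v}. lim_src src h c e - lim_src src h c' e)
      = (\<Sum>e\<in>{e\<in>E. tgt e = v}. lim_tgt tgt h c e - lim_tgt tgt h c' e)"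
    using circulation_lim_tgt_offset[OF c c' _ nonempty] by (intro sum.cong) auto
  also have "\<dots> = (\<Sum>e\<in>{e\<in>E. tgt e = v}. lim_tgt tgt h c e) - (\<Sum>e\<in>{e\<in>E. tgt e = v}. lim_tgt tgt h c' e)"
    by (rule sum_subtractf)
  also have "\<dots> = (\<Sum>e\<in>{e\<in>E. src e = v}. lim_src src h c e) - (\<Sum>e\<in>{e\<in>E. src e = v}. lim_src src h c' e)"
    using circulation_balanced[OF c v] circulation_balanced[OF c' v] by simp
  also have "\<dots> = (\<Sum>e\<in>{e\<in>E. src e = v}. lim_src src h c e - lim_src src h c' e)"
    by (rule sum_subtractf[symmetric])
  finally show ?thesis .
qed

lemma affine_functional_on_circulations_lim_at:
  assumes e: "e \<in> E"
  shows "affine_functional_on {c. circulation V E src tgt h rho B c} (\<lambda>c. - lim_at src tgt h c v e)"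
  unfolding affine_functional_on_def
proof (intro ballI allI)
  fix a b u
  assume "a \<in> {c. circulation V E src tgt h rho B c}" "b \<in> {c. circulation V E src tgt h rho B c}"
  note lims = circulation_tendsto_lims[OF _ e, of V src tgt h rho B]
  let ?ab = "\<lambda>e t. u * a e t + (1 - u) * b e t"
  have "lim_src src h ?ab e = u * lim_src src h a e + (1 - u) * lim_src src h b e"
    unfolding lim_src_def[of _ _ ?ab] using lims(1) \<open>a \<in> _\<close> \<open>b \<in> _\<close>
    by (intro tendsto_Lim tendsto_intros) auto
  moreover have "lim_tgt tgt h ?ab e = u * lim_tgt tgt h a e + (1 - u) * lim_tgt tgt h b e"
    unfolding lim_tgt_def[of _ _ ?ab] using lims(2) \<open>a \<in> _\<close> \<open>b \<in> _\<close>
    by (intro tendsto_Lim tendsto_intros) auto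
  ultimately show "- lim_at src tgt h ?ab v e
      = u * - lim_at src tgt h a v e + (1 - u) * - lim_at src tgt h b v e"
    by (simp add: lim_at_def algebra_simps)
qed

lemma circulations_finite_dim_affine:
  fixes E :: "'e set"
  assumes fE: "finite E"
  shows "finite_dim_affine {c. circulation V E src tgt h rho B c}"
proof (cases "\<exists>c0. circulation V E src tgt h rho B c0")
  case False
  then show ?thesis unfolding finite_dim_affine_def by (intro exI[of _ "{}"]) auto
next
  case True
  then obtain c0 where c0: "circulation V E src tgt h rho B c0" by blast
  define chi :: "'e \<Rightarrow> 'e \<Rightarrow> real \<Rightarrow> real" where
    "chi e = (\<lambda>e' t. if e' = e \<and> t \<in> {lo src h e<..<hi tgt h e} then 1 else 0)" for e
  define mid where "mid e = (lo src h e + hi tgt h e) / 2" for e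
  have offset: "c - c0 = (\<Sum>e\<in>E. fscale (c e (mid e) - c0 e (mid e)) (chi e))"
    if c: "circulation V E src tgt h rho B c" for c
  proof (intro ext)
    fix e' t
    have "(\<Sum>e\<in>E. fscale (c e (mid e) - c0 e (mid e)) (chi e)) e' t
        = (\<Sum>e\<in>E. if e = e' \<and> e' \<in> E \<and> t \<in> {lo src h e'<..<hi tgt h e'}
                    then c e' (mid e') - c0 e' (mid e') else 0)"
      by (auto simp: sum_fun_apply2 fscale_def chi_def intro!: sum.cong)
    also have "\<dots> = (c - c0) e' t"
    proof (cases "e' \<in> E \<and> t \<in> {lo src h e'<..<hi tgt h e'}")
      case True
      then have "mid e' \<in> {lo src h e'<..<hi tgt h e'}" by (auto simp: mid_def)
      then show ?thesis
        using True fE circulation_edge_offset[OF c c0, of e'] by simp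
    next
      case False
      then have "c e' t = 0" "c0 e' t = 0"
        using circulation_outside_edges[OF c] circulation_outside_edges[OF c0] by blast+
      with False show ?thesis by (auto intro!: sum.neutral)
    qed
    finally show "(c - c0) e' t = (\<Sum>e\<in>E. fscale (c e (mid e) - c0 e (mid e)) (chi e)) e' t" ..
  qed
  have "c - c0 \<in> fun_space.span (chi ` E)" if "circulation V E src tgt h rho B c" for c
    unfolding offset[OF that] by (intro fun_space.span_sum fun_space.span_scale fun_space.span_base imageI)
  with c0 fE show ?thesis by (intro finite_dim_affineI[of c0 _ "chi ` E"]) auto
qed

lemma lim_src_nonpos_if_totally_negative:
  assumes rg: "reeb_graph V E src tgt h {}"
    and c: "circulation V E src tgt h rho {} c" and tn: "totally_negative V E src tgt h c"
    and e: "e \<in> E"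
  shows "lim_src src h c e \<le> 0"
proof -
  let ?v = "src e"
  have fE: "finite E" and v: "?v \<in> V" and "univalent E src tgt ?v \<or> trivalent E src tgt ?v"
    using rg e unfolding reeb_graph_def by auto
  then consider "trivalent E src tgt ?v" | "univalent E src tgt ?v" by blast
  then show ?thesis
  proof cases
    case 1
    then have "lim_at src tgt h c ?v e < 0"
      using tn v e unfolding totally_negative_def adj_edges_def by auto
    then show ?thesis by (simp add: lim_at_def)
  next
    case 2
    have e_out: "e \<in> {e'\<in>E. src e' = ?v}" using e by simp
    then have "outdeg E src ?v \<noteq> 0" using fE unfolding outdeg_def by auto
    with 2 have "indeg E tgt ?v = 0" "outdeg E src ?v = 1" unfolding univalent_def by auto
    then have no_in: "{e'\<in>E. tgt e' = ?v} = {}" and one_out: "card {e'\<in>E. src e' = ?v} = 1"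
      using fE unfolding indeg_def outdeg_def by auto
    from one_out obtain x where "{e'\<in>E. src e' = ?v} = {x}" by (rule card_1_singletonE)
    with e_out have only_out: "{e'\<in>E. src e' = ?v} = {e}" by simp
    show ?thesis using circulation_balanced[OF c, of ?v] v no_in only_out by simp
  qed
qed

lemma totally_negative_circulations_bounded:
  assumes rg: "reeb_graph V E src tgt h {}"
  shows "\<exists>M. \<forall>c. circulation V E src tgt h rho {} c \<and> totally_negative V E src tgt h c \<longrightarrow>
           (\<forall>e t. \<bar>c e t\<bar> \<le> M)"
proof (cases "\<exists>c'. circulation V E src tgt h rho {} c'")
  case False
  then show ?thesis by auto
next
  case True
  then obtain c' where c': "circulation V E src tgt h rho {} c'" by blast
  have fV: "finite V" and fE: "finite E"
    and ends: "\<And>e. e \<in> E \<Longrightarrow> src e \<in> V \<and> tgt e \<in> V \<and> h (src e) < h (tgt e)"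
    using rg unfolding reeb_graph_def by auto
  have nonempty: "\<And>e. e \<in> E \<Longrightarrow> lo src h e < hi tgt h e" using ends by (simp add: lo_def hi_def)
  have "\<forall>e\<in>E. \<exists>K. \<forall>t\<in>{lo src h e<..<hi tgt h e}. \<bar>c' e t\<bar> \<le> K"
    using circulation_bounded_on_edge[OF c'] nonempty by blast
  then obtain K where K: "\<And>e t. e \<in> E \<Longrightarrow> t \<in> {lo src h e<..<hi tgt h e} \<Longrightarrow> \<bar>c' e t\<bar> \<le> K e"
    by metis
  define M where "M = (\<Sum>e\<in>E. \<bar>K e\<bar>) + (\<Sum>e\<in>E. \<bar>lim_src src h c' e\<bar>)"
  have "\<bar>c e t\<bar> \<le> M"
    if c: "circulation V E src tgt h rho {} c" and tn: "totally_negative V E src tgt h c" for c e t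
  proof (cases "e \<in> E \<and> t \<in> {lo src h e<..<hi tgt h e}")
    case True
    then have e: "e \<in> E" by simp
    let ?d = "\<lambda>e. lim_src src h c e - lim_src src h c' e"
    have "\<bar>?d e\<bar> \<le> (\<Sum>e\<in>E. \<bar>- lim_src src h c' e\<bar>)"
    proof (rule balanced_bounded_above_abs_le[OF fV fE ends])
      show "\<And>v. v \<in> V \<Longrightarrow> (\<Sum>e\<in>{e\<in>E. tgt e = v}. ?d e) = (\<Sum>e\<in>{e\<in>E. src e = v}. ?d e)"
        using circulation_offsets_balanced[OF c c' nonempty] by simp
      show "\<And>e. e \<in> E \<Longrightarrow> ?d e \<le> - lim_src src h c' e"
        using lim_src_nonpos_if_totally_negative[OF rg c tn] by simp
    qed (use e in auto)
    moreover have "\<bar>K e\<bar> \<le> (\<Sum>e\<in>E. \<bar>K e\<bar>)" using True fE by (intro member_le_sum) auto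
    ultimately show ?thesis
      using circulation_edge_offset[OF c c'] K[of e t] True by (simp add: M_def)
  next
    case False
    then show ?thesis
      using circulation_outside_edges[OF c] by (simp add: M_def sum_nonneg add_nonneg_nonneg)
  qed
  then show ?thesis by blast
qed

theorem theorem4p25:
  fixes V :: "'v set" and E :: "'e set" and src tgt :: "'e \<Rightarrow> 'v"
    and h :: "'v \<Rightarrow> real" and rho :: "'e \<Rightarrow> real \<Rightarrow> real"
  assumes "reeb_graph V E src tgt h {}"
    and "log_smooth V E src tgt h rho"
  shows "open_convex_polytope_in
           {c. circulation V E src tgt h rho {} c}
           {c. circulation V E src tgt h rho {} c \<and> totally_negative V E src tgt h c}
       \<and> (\<exists>M. \<forall>c. circulation V E src tgt h rho {} c \<and> totally_negative V E src tgt h c \<longrightarrow>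
                  (\<forall>e t. \<bar>c e t\<bar> \<le> M))"
proof -
  let ?A = "{c. circulation V E src tgt h rho {} c}"
  let ?S = "{c. circulation V E src tgt h rho {} c \<and> totally_negative V E src tgt h c}"
  have fV: "finite V" and fE: "finite E" using assms(1) unfolding reeb_graph_def by auto
  define P where "P = (SIGMA v:{v\<in>V. trivalent E src tgt v}. adj_edges E src tgt v)"
  define L where "L = (\<lambda>(v, e) c. - lim_at src tgt h c v e) ` P"
  have P_sub: "P \<subseteq> V \<times> E" by (auto simp: P_def adj_edges_def)
  have "\<exists>L. finite L \<and> (\<forall>l\<in>L. affine_functional_on ?A l) \<and> ?S = {c \<in> ?A. \<forall>l\<in>L. l c > 0}"
  proof (intro exI[of _ L] conjI)
    show "finite L" unfolding L_def using P_sub finite_subset fV fE by blast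
    show "\<forall>l\<in>L. affine_functional_on ?A l"
      using P_sub by (auto simp: L_def intro: affine_functional_on_circulations_lim_at)
    have "(\<forall>l\<in>L. l c > 0) \<longleftrightarrow> totally_negative V E src tgt h c" for c
      by (simp add: L_def P_def totally_negative_def) blast
    then show "?S = {c \<in> ?A. \<forall>l\<in>L. l c > 0}" by auto
  qed
  moreover have "finite_dim_affine ?A" by (rule circulations_finite_dim_affine[OF fE])
  moreover have bounded: "\<exists>M. \<forall>c. circulation V E src tgt h rho {} c \<and> totally_negative V E src tgt h c \<longrightarrow>
      (\<forall>e t. \<bar>c e t\<bar> \<le> M)"
    by (rule totally_negative_circulations_bounded[OF assms(1)])
  moreover from bounded have "\<exists>M. \<forall>c\<in>?S. \<forall>e t. \<bar>c e t\<bar> \<le> M" by simp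
  ultimately show ?thesis unfolding open_convex_polytope_in_def by blast
qed

end
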